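(* Let $(G,d,(D_\lambda)_{\lambda>0},\Gamma,V)$ be a dilation datum, $\lambda_0>1$ with $D:=D_{\lambda_0}$ satisfying $D(\Gamma)\subset\Gamma$, and $r_+>0$ with $V\subset B(e,r_+)$. Let $r>r_+$ and $\lambda_0>\frac{r}{r-r_+}$. If $B(e,r)\subset V(n_0)$ for some $n_0\in\mathbb N$, then every bounded subset of $G$ is contained in $V(n)$ for some $n\in\mathbb N$, and for all $k\in\mathbb N$ \[B(e,c_-\lambda_0^{k-1})\subset V(n_0+k)\subset B(e,c_+\lambda_0^{n_0+k}),\] where $c_-:=\lambda_0(r-r_+)-r>0$ and $c_+:=r\big(1+\frac{\lambda_0}{\lambda_0-1}\big)$.
   Context: Dilation datum $(G,d,(D_\lambda),\Gamma,V)$: $G$ connected lcsc group, $d$ left-invariant metric inducing the topology, $\lambda\mapsto D_\lambda$ homomorphism $(\mathbb R_{>0},\cdot)\to\mathrm{Aut}(G)$ with $d(D_\lambda g,D_\lambda h)=\lambda d(g,h)$; $\Gamma$ uniform lattice with $D_\lambda(\Gamma)\subset\Gamma$ for some $\lambda>1$; $V$ bounded Borel set containing an open identity neighbourhood with $G=\bigsqcup_{\gamma\in\Gamma}\gamma V$. $B(g,r)$ is the open $d$-ball. $V(0):=V$ and $V(n):=D\big((V(n-1)\cap\Gamma)V\big)$ for $n\ge1$. *)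

theory Defs
  imports "HOL-Analysis.Analysis"
begin

text \<open>The group G is modelled as a type 'a with a (not necessarily commutative)
group structure written additively (class group_add; identity 0, product x + y)
and a metric (class metric_space) which induces the topology.\<close>

definition topological_group :: "'a::{metric_space,group_add} itself \<Rightarrow> bool" where
  "topological_group _ \<longleftrightarrow>
     continuous_on UNIV (\<lambda>p::'a \<times> 'a. fst p + snd p) \<and>
     continuous_on UNIV (uminus :: 'a \<Rightarrow> 'a)"

definition left_invariant_metric :: "'a::{metric_space,group_add} itself \<Rightarrow> bool" where
  "left_invariant_metric _ \<longleftrightarrow> (\<forall>g x y :: 'a. dist (g + x) (g + y) = dist x y)"

definition lmult :: "'a::group_add \<Rightarrow> 'a set \<Rightarrow> 'a set" where
  "lmult g A = (\<lambda>a. g + a) ` A"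

definition setprod :: "'a::group_add set \<Rightarrow> 'a set \<Rightarrow> 'a set" where
  "setprod A B = {a + b | a b. a \<in> A \<and> b \<in> B}"

definition is_subgroup :: "'a::group_add set \<Rightarrow> bool" where
  "is_subgroup H \<longleftrightarrow> 0 \<in> H \<and> (\<forall>x\<in>H. \<forall>y\<in>H. x + y \<in> H) \<and> (\<forall>x\<in>H. - x \<in> H)"

definition uniform_lattice :: "'a::{metric_space,group_add} set \<Rightarrow> bool" where
  "uniform_lattice \<Gamma> \<longleftrightarrow> is_subgroup \<Gamma> \<and>
     (\<forall>\<gamma>\<in>\<Gamma>. \<exists>\<epsilon>>0. \<forall>\<gamma>'\<in>\<Gamma>. dist \<gamma> \<gamma>' < \<epsilon> \<longrightarrow> \<gamma>' = \<gamma>) \<and>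
     (\<exists>K. compact K \<and> setprod \<Gamma> K = UNIV)"

definition automorphism :: "('a::{metric_space,group_add} \<Rightarrow> 'a) \<Rightarrow> bool" where
  "automorphism f \<longleftrightarrow> bij f \<and> (\<forall>x y. f (x + y) = f x + f y) \<and> homeomorphism UNIV UNIV f (inv f)"

definition dilation_datum ::
  "(real \<Rightarrow> 'a::{metric_space,group_add,second_countable_topology} \<Rightarrow> 'a) \<Rightarrow> 'a set \<Rightarrow> 'a set \<Rightarrow> bool" where
  "dilation_datum D \<Gamma> V \<longleftrightarrow>
     topological_group TYPE('a) \<and> connected (UNIV :: 'a set) \<and> locally compact (UNIV :: 'a set) \<and>
     left_invariant_metric TYPE('a) \<and>
     D 1 = id \<and> (\<forall>s>0. \<forall>t>0. D (s * t) = D s \<circ> D t) \<and>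
     (\<forall>s>0. automorphism (D s)) \<and>
     (\<forall>s>0. \<forall>g h. dist (D s g) (D s h) = s * dist g h) \<and>
     uniform_lattice \<Gamma> \<and> (\<exists>s>1. D s ` \<Gamma> \<subseteq> \<Gamma>) \<and>
     bounded V \<and> V \<in> sets borel \<and> (\<exists>U. open U \<and> 0 \<in> U \<and> U \<subseteq> V) \<and>
     (\<forall>g. \<exists>!\<gamma>. \<gamma> \<in> \<Gamma> \<and> g \<in> lmult \<gamma> V)"

fun Vn :: "('a::group_add \<Rightarrow> 'a) \<Rightarrow> 'a set \<Rightarrow> 'a set \<Rightarrow> nat \<Rightarrow> 'a set" where
  "Vn D \<Gamma> V 0 = V"
| "Vn D \<Gamma> V (Suc n) = D ` setprod (Vn D \<Gamma> V n \<inter> \<Gamma>) V"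

end

theory Submission
  imports Defs
begin

(* Write |g| for dist 0 g. The dilation multiplies |g| by l, and every tile lies in B(0,rp),
   so a ball B(0,t) inside V(n) yields the ball B(0, l (t - rp)) inside V(n+1), while an outer
   radius R of V(n) grows to at most l (R + rp). Both recursions are affine with ratio l > 1 and
   fixed points +-l rp/(l - 1); solving them gives the two radii. The inner radius grows
   geometrically exactly when l (r - rp) > r, and then every bounded set is eventually swallowed. *)

lemma dist_zero_add_le:
  fixes a b :: "'a::{metric_space,group_add}"
  assumes "left_invariant_metric TYPE('a)"
  shows "dist 0 (a + b) \<le> dist 0 a + dist 0 b"
proof -
  have "dist a (a + b) = dist 0 b"
    using assms unfolding left_invariant_metric_def by (metis add.right_neutral)
  then show ?thesis using dist_triangle[of 0 "a + b" a] by simp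
qed

lemma dist_zero_minus:
  fixes a :: "'a::{metric_space,group_add}"
  assumes "left_invariant_metric TYPE('a)"
  shows "dist 0 (- a) = dist 0 a"
  using assms unfolding left_invariant_metric_def
  by (metis add.right_neutral add.right_inverse dist_commute)

locale dilated_tiling =
  fixes E :: "'a::{metric_space,group_add} \<Rightarrow> 'a" and \<Gamma> V :: "'a set" and l r\<^sub>p :: real
  assumes left_invariant: "left_invariant_metric TYPE('a)"
    and E_zero: "E 0 = 0"
    and E_surj: "surj E"
    and dist_E: "\<And>x y. dist (E x) (E y) = l * dist x y"
    and l_gt_1: "l > 1"
    and tiling: "\<And>g. \<exists>\<gamma>\<in>\<Gamma>. \<exists>v\<in>V. g = \<gamma> + v"
    and V_subset: "V \<subseteq> ball 0 r\<^sub>p"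
begin

lemma dist_zero_E: "dist 0 (E x) = l * dist 0 x"
  using dist_E[of 0 x] E_zero by simp

lemma tile_radius_pos: "r\<^sub>p > 0"
proof -
  obtain v where "v \<in> V" using tiling by blast
  then have "dist 0 v < r\<^sub>p" using V_subset by auto
  then show ?thesis using zero_le_dist[of 0 v] by linarith
qed

lemma fixed_point: "l * (l * r\<^sub>p / (l - 1) - r\<^sub>p) = l * r\<^sub>p / (l - 1)"
  using l_gt_1 by (simp add: field_simps)

lemma ball_subset_Vn_Suc:
  assumes "ball 0 t \<subseteq> Vn E \<Gamma> V m"
  shows "ball 0 (l * (t - r\<^sub>p)) \<subseteq> Vn E \<Gamma> V (Suc m)"
proof
  fix g :: 'a assume "g \<in> ball 0 (l * (t - r\<^sub>p))"
  moreover obtain h where g: "g = E h" using E_surj by (metis surj_def)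
  ultimately have h: "dist 0 h < t - r\<^sub>p"
    using l_gt_1 by (simp add: dist_zero_E)
  obtain \<gamma> v where \<gamma>: "\<gamma> \<in> \<Gamma>" and v: "v \<in> V" and hv: "h = \<gamma> + v" using tiling by blast
  have "dist 0 \<gamma> \<le> dist 0 h + dist 0 v"
    using hv dist_zero_add_le[OF left_invariant, of h "- v"] dist_zero_minus[OF left_invariant, of v]
    by (simp add: algebra_simps)
  also have "\<dots> < t" using h v V_subset by auto
  finally have "\<gamma> \<in> Vn E \<Gamma> V m" using assms by auto
  then have "h \<in> setprod (Vn E \<Gamma> V m \<inter> \<Gamma>) V" using \<gamma> v hv unfolding setprod_def by blast
  then show "g \<in> Vn E \<Gamma> V (Suc m)" using g by simp
qed

lemma ball_subset_Vn_add:
  assumes "ball 0 r \<subseteq> Vn E \<Gamma> V n\<^sub>0"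
  shows "ball 0 (l * r\<^sub>p / (l - 1) + l ^ k * (r - l * r\<^sub>p / (l - 1))) \<subseteq> Vn E \<Gamma> V (n\<^sub>0 + k)"
proof (induction k)
  case 0
  then show ?case using assms by simp
next
  case (Suc k)
  have "l * r\<^sub>p / (l - 1) + l ^ Suc k * (r - l * r\<^sub>p / (l - 1))
      = l * (l * r\<^sub>p / (l - 1) + l ^ k * (r - l * r\<^sub>p / (l - 1)) - r\<^sub>p)"
    using fixed_point by (simp add: algebra_simps)
  then show ?case using ball_subset_Vn_Suc[OF Suc.IH] by simp
qed

lemma Vn_subset_ball:
  "Vn E \<Gamma> V n \<subseteq> ball 0 (l ^ n * (r\<^sub>p + l * r\<^sub>p / (l - 1)) - l * r\<^sub>p / (l - 1))"
proof (induction n)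
  case 0
  show ?case using V_subset by simp
next
  case (Suc n)
  show ?case
  proof
    fix x assume "x \<in> Vn E \<Gamma> V (Suc n)"
    then obtain a b where a: "a \<in> Vn E \<Gamma> V n" and b: "b \<in> V" and x: "x = E (a + b)"
      by (auto simp: setprod_def)
    have "dist 0 (a + b) \<le> dist 0 a + dist 0 b" by (rule dist_zero_add_le[OF left_invariant])
    also have "\<dots> < l ^ n * (r\<^sub>p + l * r\<^sub>p / (l - 1)) - l * r\<^sub>p / (l - 1) + r\<^sub>p"
      using a b Suc.IH V_subset by (intro add_strict_mono) auto
    finally have "dist 0 x < l * (l ^ n * (r\<^sub>p + l * r\<^sub>p / (l - 1)) - l * r\<^sub>p / (l - 1) + r\<^sub>p)"
      using x l_gt_1 by (simp add: dist_zero_E)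
    also have "\<dots> = l ^ Suc n * (r\<^sub>p + l * r\<^sub>p / (l - 1)) - l * r\<^sub>p / (l - 1)"
      using fixed_point by (simp add: algebra_simps)
    finally show "x \<in> ball 0 (l ^ Suc n * (r\<^sub>p + l * r\<^sub>p / (l - 1)) - l * r\<^sub>p / (l - 1))"
      by simp
  qed
qed

lemma margin_eq: "l * (r - r\<^sub>p) - r = (l - 1) * (r - l * r\<^sub>p / (l - 1))"
  using l_gt_1 by (simp add: field_simps)

lemma margin_pos:
  assumes "l * (r - r\<^sub>p) > r"
  shows "r - l * r\<^sub>p / (l - 1) > 0"
proof -
  have "(l - 1) * (r - l * r\<^sub>p / (l - 1)) > 0" using assms margin_eq[of r] by linarith
  then show ?thesis using l_gt_1 by (simp add: zero_less_mult_iff)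
qed

lemma ball_powr_subset_Vn:
  assumes sub: "ball 0 r \<subseteq> Vn E \<Gamma> V n\<^sub>0" and margin: "l * (r - r\<^sub>p) > r"
  shows "ball 0 ((l * (r - r\<^sub>p) - r) * l powr (real k - 1)) \<subseteq> Vn E \<Gamma> V (n\<^sub>0 + k)"
proof -
  have pos: "r - l * r\<^sub>p / (l - 1) > 0" using margin_pos[OF margin] .
  have "(l * (r - r\<^sub>p) - r) * l powr (real k - 1) = l ^ k * (r - l * r\<^sub>p / (l - 1)) * ((l - 1) / l)"
    using l_gt_1 by (simp add: margin_eq powr_diff powr_realpow)
  also have "\<dots> \<le> l ^ k * (r - l * r\<^sub>p / (l - 1))"
    using l_gt_1 pos by (intro mult_left_le) auto
  also have "\<dots> \<le> l * r\<^sub>p / (l - 1) + l ^ k * (r - l * r\<^sub>p / (l - 1))"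
    using l_gt_1 tile_radius_pos by simp
  finally show ?thesis using ball_subset_Vn_add[OF sub, of k] by auto
qed

lemma Vn_subset_ball_pow:
  assumes "r\<^sub>p \<le> r"
  shows "Vn E \<Gamma> V n \<subseteq> ball 0 (r * (1 + l / (l - 1)) * l ^ n)"
proof -
  have "l ^ n * (r\<^sub>p + l * r\<^sub>p / (l - 1)) - l * r\<^sub>p / (l - 1) \<le> l ^ n * (r\<^sub>p + l * r\<^sub>p / (l - 1))"
    using l_gt_1 tile_radius_pos by simp
  also have "\<dots> = l ^ n * (r\<^sub>p * (1 + l / (l - 1)))" by (simp add: algebra_simps)
  also have "\<dots> \<le> r * (1 + l / (l - 1)) * l ^ n"
    using l_gt_1 assms by (simp add: mult_right_mono)
  finally show ?thesis using Vn_subset_ball[of n] by auto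
qed

lemma bounded_subset_Vn:
  assumes sub: "ball 0 r \<subseteq> Vn E \<Gamma> V n\<^sub>0" and margin: "l * (r - r\<^sub>p) > r"
    and "bounded B"
  shows "\<exists>n. B \<subseteq> Vn E \<Gamma> V n"
proof -
  obtain Q where Q: "B \<subseteq> ball 0 Q" using \<open>bounded B\<close> bounded_subset_ballD by blast
  have pos: "r - l * r\<^sub>p / (l - 1) > 0" using margin_pos[OF margin] .
  obtain k where "Q / (r - l * r\<^sub>p / (l - 1)) < l ^ k" using real_arch_pow[OF l_gt_1] by blast
  then have "Q < l ^ k * (r - l * r\<^sub>p / (l - 1))" using pos by (simp add: field_simps)
  also have "\<dots> \<le> l * r\<^sub>p / (l - 1) + l ^ k * (r - l * r\<^sub>p / (l - 1))"
    using l_gt_1 tile_radius_pos by simp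
  finally have "B \<subseteq> ball 0 (l * r\<^sub>p / (l - 1) + l ^ k * (r - l * r\<^sub>p / (l - 1)))"
    using Q subset_ball[of Q] by auto
  then show ?thesis using ball_subset_Vn_add[OF sub, of k] by blast
qed

end

theorem lemma5:
  fixes D :: "real \<Rightarrow> 'a::{metric_space,group_add,second_countable_topology} \<Rightarrow> 'a"
    and \<Gamma> V :: "'a set"
    and l\<^sub>0 r\<^sub>p r :: real and n\<^sub>0 :: nat
  assumes datum: "dilation_datum D \<Gamma> V"
    and lam_gt: "l\<^sub>0 > 1" and D_Gamma: "D l\<^sub>0 ` \<Gamma> \<subseteq> \<Gamma>"
    and rp_pos: "r\<^sub>p > 0" and V_sub: "V \<subseteq> ball 0 r\<^sub>p"
    and r_gt: "r > r\<^sub>p" and lam_big: "l\<^sub>0 > r / (r - r\<^sub>p)"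
    and ball_sub: "ball 0 r \<subseteq> Vn (D l\<^sub>0) \<Gamma> V n\<^sub>0"
  shows "(\<forall>B::'a set. bounded B \<longrightarrow> (\<exists>n. B \<subseteq> Vn (D l\<^sub>0) \<Gamma> V n)) \<and>
         (let c\<^sub>m = l\<^sub>0 * (r - r\<^sub>p) - r; c\<^sub>p = r * (1 + l\<^sub>0 / (l\<^sub>0 - 1)) in
           c\<^sub>m > 0 \<and>
           (\<forall>k::nat. ball 0 (c\<^sub>m * l\<^sub>0 powr (real k - 1)) \<subseteq> Vn (D l\<^sub>0) \<Gamma> V (n\<^sub>0 + k) \<and>
                     Vn (D l\<^sub>0) \<Gamma> V (n\<^sub>0 + k) \<subseteq> ball 0 (c\<^sub>p * l\<^sub>0 ^ (n\<^sub>0 + k))))"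
proof -
  have datum_facts: "left_invariant_metric TYPE('a)" "automorphism (D l\<^sub>0)"
      "\<forall>g h. dist (D l\<^sub>0 g) (D l\<^sub>0 h) = l\<^sub>0 * dist g h"
      "\<forall>g. \<exists>!\<gamma>. \<gamma> \<in> \<Gamma> \<and> g \<in> lmult \<gamma> V"
    using datum lam_gt unfolding dilation_datum_def by auto
  have D_add: "D l\<^sub>0 (x + y) = D l\<^sub>0 x + D l\<^sub>0 y" for x y
    using datum_facts(2) unfolding automorphism_def by blast
  interpret dilated_tiling "D l\<^sub>0" \<Gamma> V l\<^sub>0 r\<^sub>p
  proof
    show "D l\<^sub>0 0 = 0" using D_add[of 0 0] by (metis add.right_neutral add_left_cancel)
    show "surj (D l\<^sub>0)" using datum_facts(2) unfolding automorphism_def bij_def by blast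
    show "\<exists>\<gamma>\<in>\<Gamma>. \<exists>v\<in>V. g = \<gamma> + v" for g
      using datum_facts(4) unfolding lmult_def by blast
  qed (use datum_facts lam_gt V_sub in auto)
  have margin: "l\<^sub>0 * (r - r\<^sub>p) > r"
    using lam_big r_gt by (simp add: pos_divide_less_eq)
  show ?thesis
    unfolding Let_def
    using bounded_subset_Vn[OF ball_sub margin] ball_powr_subset_Vn[OF ball_sub margin]
      Vn_subset_ball_pow r_gt margin by auto
qed

end
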